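(* Let $T$ be a rooted binary phylogenetic tree under the $N_2$ model. Then $RA_{\rm MP}(T)\ge RA_\varphi(T)$.
   Context: A rooted binary phylogenetic tree is a finite tree with a distinguished root vertex $\rho$ of out-degree 2, all edges directed away from $\rho$, and every other vertex of in-degree 1 and out-degree 0 or 2; out-degree-0 vertices are leaves, forming the leaf set $X$. Under the Neyman 2-state model $N_2$, each edge $e$ carries a substitution probability $p_e\in[0,\frac12]$; given the root state $F(\rho)$, states propagate independently along edges, each edge changing state with probability $p_e$; $f=F|_X$. Fitch sets: each leaf $x$ gets $\{f(x)\}$; a vertex with children $v_1,v_2$ gets $\mathrm{FS}(v_1)\cap\mathrm{FS}(v_2)$ if nonempty, else the union. $\mathrm{MP}(f,T)$ is a uniformly random element of $\mathrm{FS}(\rho)$, and $RA_{\rm MP}(T)=\mathbb P(\mathrm{MP}(f,T)=\alpha\mid F(\rho)=\alpha)$. The coin-toss method $\varphi$: leaves get their states; proceeding towards the root, a vertex whose two children have equal states gets that state, otherwise one of the two chosen by an independent fair coin toss; $RA_\varphi(T)$ is the probability that the state assigned to $\rho$ equals $F(\rho)$. *)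

theory Defs
  imports "HOL-Probability.Probability_Mass_Function"
begin

text \<open>A vertex is either a leaf, or an internal vertex with two children; the real
  number next to each child is the substitution probability of the edge leading
  to that child. States are the two states of N2, modelled as bool.
  Leaves are identified by their left-to-right position; a character f on X is
  the list of leaf states in this order.\<close>

datatype ptree = Leaf | Node real ptree real ptree

fun valid_probs :: "ptree \<Rightarrow> bool" where
  "valid_probs Leaf = True"
| "valid_probs (Node p1 l p2 r) =
     (0 \<le> p1 \<and> p1 \<le> 1/2 \<and> 0 \<le> p2 \<and> p2 \<le> 1/2 \<and> valid_probs l \<and> valid_probs r)"

fun nleaves :: "ptree \<Rightarrow> nat" where
  "nleaves Leaf = 1"
| "nleaves (Node _ l _ r) = nleaves l + nleaves r"

definition edge :: "real \<Rightarrow> bool \<Rightarrow> bool pmf" where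
  "edge p s = map_pmf (\<lambda>c. if c then \<not> s else s) (bernoulli_pmf p)"

fun leaf_char :: "ptree \<Rightarrow> bool \<Rightarrow> bool list pmf" where
  "leaf_char Leaf s = return_pmf [s]"
| "leaf_char (Node p1 l p2 r) s =
     edge p1 s \<bind> (\<lambda>s1. edge p2 s \<bind> (\<lambda>s2.
     leaf_char l s1 \<bind> (\<lambda>f1. leaf_char r s2 \<bind> (\<lambda>f2.
     return_pmf (f1 @ f2)))))"

definition fitch_comb :: "bool set \<Rightarrow> bool set \<Rightarrow> bool set" where
  "fitch_comb A B = (if A \<inter> B \<noteq> {} then A \<inter> B else A \<union> B)"

fun fitch :: "ptree \<Rightarrow> bool list \<Rightarrow> bool set" where
  "fitch Leaf f = {hd f}"
| "fitch (Node _ l _ r) f =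
     fitch_comb (fitch l (take (nleaves l) f)) (fitch r (drop (nleaves l) f))"

definition MP :: "ptree \<Rightarrow> bool list \<Rightarrow> bool pmf" where
  "MP T f = pmf_of_set (fitch T f)"

fun coin :: "ptree \<Rightarrow> bool list \<Rightarrow> bool pmf" where
  "coin Leaf f = return_pmf (hd f)"
| "coin (Node _ l _ r) f =
     coin l (take (nleaves l) f) \<bind> (\<lambda>a. coin r (drop (nleaves l) f) \<bind> (\<lambda>b.
     (if a = b then return_pmf a
      else map_pmf (\<lambda>c. if c then a else b) (bernoulli_pmf (1/2)))))"

definition RA_MP :: "ptree \<Rightarrow> bool \<Rightarrow> real" where
  "RA_MP T \<alpha> = pmf (leaf_char T \<alpha> \<bind> (\<lambda>f. MP T f)) \<alpha>"

definition RA_coin :: "ptree \<Rightarrow> bool \<Rightarrow> real" where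
  "RA_coin T \<alpha> = pmf (leaf_char T \<alpha> \<bind> (\<lambda>f. coin T f)) \<alpha>"

end

theory Submission
  imports Defs
begin

text \<open>Measure both methods by their bias towards the root state, i.e.\ twice the
  accuracy minus one. Exchanging the two states is a symmetry of the model, of Fitch's
  algorithm and of the coin toss; hence an edge with substitution probability \<open>p\<close>
  multiplies the bias of the subtree below it by \<open>1 - 2p\<close>. At a vertex the coin toss
  averages the two damped biases of the children, whereas Fitch's rule weights each of
  them by \<open>(1 + a)/2\<close>, where \<open>a \<ge> 0\<close> is the probability that the Fitch set of the other
  child is ambiguous. By induction on the tree the coin-toss bias is nonnegative and
  dominated by the Fitch bias.\<close>

lemma integrable_measure_pmf_finite_type [simp]:
  fixes M :: "'a::finite pmf" and f :: "'a \<Rightarrow> real"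
  shows "integrable (measure_pmf M) f"
  by (rule integrable_measure_pmf_finite) simp

lemma expectation_bind_pmf_finite:
  fixes M :: "'a::finite pmf" and N :: "'a \<Rightarrow> 'b::finite pmf" and g :: "'b \<Rightarrow> real"
  shows "measure_pmf.expectation (M \<bind> N) g =
    measure_pmf.expectation M (\<lambda>x. measure_pmf.expectation (N x) g)"
  by (subst pmf_expectation_bind[of UNIV], simp_all, subst integral_measure_pmf[of UNIV]) auto

lemma nonempty_bool_set_cases:
  fixes S :: "bool set"
  assumes "S \<noteq> {}"
  obtains "S = {s}" | "S = {\<not> s}" | "S = UNIV"
proof -
  have bool_set_eq_iff: "A = B \<longleftrightarrow> (True \<in> A \<longleftrightarrow> True \<in> B) \<and> (False \<in> A \<longleftrightarrow> False \<in> B)"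
    for A B :: "bool set"
    by (simp add: set_eq_iff all_bool_eq)
  have "S = {s} \<or> S = {\<not> s} \<or> S = UNIV"
    using assms by (cases s; cases "True \<in> S"; cases "False \<in> S") (simp_all add: bool_set_eq_iff)
  with that show ?thesis
    by blast
qed

lemma length_leaf_char: "f \<in> set_pmf (leaf_char T s) \<Longrightarrow> length f = nleaves T"
  by (induction T arbitrary: s f) auto

lemma fitch_nonempty: "fitch T f \<noteq> {}"
  by (induction T arbitrary: f) (auto simp: fitch_comb_def)

lemma edge_Not: "edge p (\<not> s) = map_pmf Not (edge p s)"
  by (simp add: edge_def pmf.map_comp o_def)

lemma leaf_char_Not: "leaf_char T (\<not> s) = map_pmf (map Not) (leaf_char T s)"
  by (induction T arbitrary: s) (simp_all add: edge_Not bind_map_pmf map_bind_pmf)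

lemma fitch_comb_image:
  assumes "inj f"
  shows "fitch_comb (f ` A) (f ` B) = f ` fitch_comb A B"
  by (simp add: fitch_comb_def image_Un flip: image_Int[OF assms])

lemma fitch_map_Not: "length f = nleaves T \<Longrightarrow> fitch T (map Not f) = Not ` fitch T f"
proof (induction T arbitrary: f)
  case Leaf
  then show ?case by (cases f) simp_all
next
  case (Node p1 l p2 r)
  have "inj Not"
    by (simp add: inj_def)
  with Node show ?case
    by (simp add: take_map drop_map fitch_comb_image)
qed

definition coin_toss :: "bool \<Rightarrow> bool \<Rightarrow> bool pmf" where
  "coin_toss a b = (if a = b then return_pmf a
     else map_pmf (\<lambda>c. if c then a else b) (bernoulli_pmf (1/2)))"

lemma coin_Node:
  "coin (Node p1 l p2 r) f =
     coin l (take (nleaves l) f) \<bind> (\<lambda>a. coin r (drop (nleaves l) f) \<bind> coin_toss a)"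
  by (simp add: coin_toss_def [abs_def])

lemma coin_toss_Not: "coin_toss (\<not> a) (\<not> b) = map_pmf Not (coin_toss a b)"
  by (cases a; cases b) (simp_all add: coin_toss_def pmf.map_comp o_def)

lemma coin_map_Not: "length f = nleaves T \<Longrightarrow> coin T (map Not f) = map_pmf Not (coin T f)"
proof (induction T arbitrary: f)
  case Leaf
  then show ?case by (cases f) simp_all
next
  case (Node p1 l p2 r)
  let ?f1 = "take (nleaves l) f" and ?f2 = "drop (nleaves l) f"
  have "coin (Node p1 l p2 r) (map Not f) =
      map_pmf Not (coin l ?f1) \<bind> (\<lambda>a. map_pmf Not (coin r ?f2) \<bind> coin_toss a)"
    using Node by (simp add: coin_Node take_map drop_map del: coin.simps)
  also have "\<dots> = coin l ?f1 \<bind> (\<lambda>a. coin r ?f2 \<bind> (\<lambda>b. map_pmf Not (coin_toss a b)))"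
    by (simp add: bind_map_pmf coin_toss_Not)
  also have "\<dots> = map_pmf Not (coin (Node p1 l p2 r) f)"
    by (simp add: coin_Node map_bind_pmf del: coin.simps)
  finally show ?case .
qed

lemma leaf_char_Node:
  "leaf_char (Node p1 l p2 r) s =
     (edge p1 s \<bind> leaf_char l) \<bind> (\<lambda>f1. (edge p2 s \<bind> leaf_char r) \<bind> (\<lambda>f2. return_pmf (f1 @ f2)))"
proof -
  have "leaf_char (Node p1 l p2 r) s =
      edge p1 s \<bind> (\<lambda>s1. leaf_char l s1 \<bind> (\<lambda>f1. edge p2 s \<bind> (\<lambda>s2.
        leaf_char r s2 \<bind> (\<lambda>f2. return_pmf (f1 @ f2)))))"
    by (simp, intro bind_pmf_cong refl bind_commute_pmf)
  then show ?thesis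
    by (simp add: bind_assoc_pmf)
qed

definition fitch_dist :: "ptree \<Rightarrow> bool \<Rightarrow> bool set pmf" where
  "fitch_dist T s = map_pmf (fitch T) (leaf_char T s)"

definition coin_dist :: "ptree \<Rightarrow> bool \<Rightarrow> bool pmf" where
  "coin_dist T s = leaf_char T s \<bind> coin T"

lemma fitch_dist_Not: "fitch_dist T (\<not> s) = map_pmf ((`) Not) (fitch_dist T s)"
  unfolding fitch_dist_def leaf_char_Not pmf.map_comp
  by (intro map_pmf_cong) (auto simp: fitch_map_Not length_leaf_char)

lemma coin_dist_Not: "coin_dist T (\<not> s) = map_pmf Not (coin_dist T s)"
  unfolding coin_dist_def leaf_char_Not bind_map_pmf map_bind_pmf
  by (intro bind_pmf_cong) (auto simp: coin_map_Not length_leaf_char)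

lemma fitch_dist_Node:
  "fitch_dist (Node p1 l p2 r) s =
     (edge p1 s \<bind> fitch_dist l) \<bind> (\<lambda>A. (edge p2 s \<bind> fitch_dist r) \<bind> (\<lambda>B. return_pmf (fitch_comb A B)))"
proof -
  have "fitch_dist (Node p1 l p2 r) s =
      (edge p1 s \<bind> leaf_char l) \<bind> (\<lambda>f1. (edge p2 s \<bind> leaf_char r) \<bind> (\<lambda>f2.
        return_pmf (fitch_comb (fitch l f1) (fitch r f2))))"
    unfolding fitch_dist_def leaf_char_Node map_bind_pmf
    by (intro bind_pmf_cong refl) (auto simp: length_leaf_char)
  also have "\<dots> = (edge p1 s \<bind> fitch_dist l) \<bind> (\<lambda>A. (edge p2 s \<bind> fitch_dist r) \<bind> (\<lambda>B.
        return_pmf (fitch_comb A B)))"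
    by (simp add: fitch_dist_def [abs_def] bind_map_pmf flip: map_bind_pmf)
  finally show ?thesis .
qed

lemma coin_dist_Node:
  "coin_dist (Node p1 l p2 r) s =
     (edge p1 s \<bind> coin_dist l) \<bind> (\<lambda>a. (edge p2 s \<bind> coin_dist r) \<bind> coin_toss a)"
proof -
  have "coin_dist (Node p1 l p2 r) s =
      (edge p1 s \<bind> leaf_char l) \<bind> (\<lambda>f1. (edge p2 s \<bind> leaf_char r) \<bind> (\<lambda>f2.
        coin l f1 \<bind> (\<lambda>a. coin r f2 \<bind> coin_toss a)))"
    unfolding coin_dist_def leaf_char_Node bind_assoc_pmf bind_return_pmf
    by (intro bind_pmf_cong refl) (simp add: coin_Node length_leaf_char del: coin.simps)
  also have "\<dots> = (edge p1 s \<bind> leaf_char l) \<bind> (\<lambda>f1. coin l f1 \<bind> (\<lambda>a.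
        (edge p2 s \<bind> leaf_char r) \<bind> (\<lambda>f2. coin r f2 \<bind> coin_toss a)))"
    by (intro bind_pmf_cong refl bind_commute_pmf)
  finally show ?thesis
    by (simp add: coin_dist_def [abs_def] bind_assoc_pmf)
qed

definition fitch_bias :: "bool \<Rightarrow> bool set \<Rightarrow> real" where
  "fitch_bias s S = of_bool (s \<in> S) - of_bool ((\<not> s) \<in> S)"

definition ambiguous :: "bool set \<Rightarrow> real" where
  "ambiguous S = of_bool (S = UNIV)"

definition agreement :: "bool \<Rightarrow> bool \<Rightarrow> real" where
  "agreement s b = (if b = s then 1 else -1)"

lemma fitch_bias_image_Not: "fitch_bias s (Not ` S) = - fitch_bias s S"
proof -
  have "b \<in> Not ` S \<longleftrightarrow> (\<not> b) \<in> S" for b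
    by force
  then show ?thesis
    by (simp add: fitch_bias_def)
qed

lemma agreement_Not: "agreement s (\<not> b) = - agreement s b"
  by (cases b; cases s) (simp_all add: agreement_def)

lemma fitch_bias_fitch_comb:
  assumes "A \<noteq> {}" "B \<noteq> {}"
  shows "fitch_bias s (fitch_comb A B) =
    (fitch_bias s A * (1 + ambiguous B) + fitch_bias s B * (1 + ambiguous A)) / 2"
  by (rule nonempty_bool_set_cases[OF assms(1), of s]; rule nonempty_bool_set_cases[OF assms(2), of s];
      cases s) (simp_all add: fitch_comb_def fitch_bias_def ambiguous_def UNIV_bool)

lemma pmf_pmf_of_set_bool:
  fixes S :: "bool set"
  assumes "S \<noteq> {}"
  shows "pmf (pmf_of_set S) s = (1 + fitch_bias s S) / 2"
  using assms by (cases rule: nonempty_bool_set_cases[of S s]) (auto simp: fitch_bias_def UNIV_bool)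

lemma expectation_edge:
  assumes "0 \<le> p" "p \<le> 1"
  shows "measure_pmf.expectation (edge p s) g = (1 - p) * g s + p * g (\<not> s)"
  using assms by (simp add: edge_def)

lemma expectation_coin_toss:
  "measure_pmf.expectation (coin_toss a b) (agreement s) = (agreement s a + agreement s b) / 2"
  by (cases a; cases b; cases s) (simp_all add: coin_toss_def agreement_def)

definition mp_bias :: "ptree \<Rightarrow> bool \<Rightarrow> real" where
  "mp_bias T s = measure_pmf.expectation (fitch_dist T s) (fitch_bias s)"

definition coin_bias :: "ptree \<Rightarrow> bool \<Rightarrow> real" where
  "coin_bias T s = measure_pmf.expectation (coin_dist T s) (agreement s)"

lemma RA_MP_eq_mp_bias: "RA_MP T \<alpha> = (1 + mp_bias T \<alpha>) / 2"
proof -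
  have "RA_MP T \<alpha> = measure_pmf.expectation (fitch_dist T \<alpha>) (\<lambda>S. pmf (pmf_of_set S) \<alpha>)"
    by (simp add: RA_MP_def MP_def fitch_dist_def bind_map_pmf pmf_bind)
  also have "\<dots> = measure_pmf.expectation (fitch_dist T \<alpha>) (\<lambda>S. (1 + fitch_bias \<alpha> S) / 2)"
    by (intro integral_cong_AE)
       (auto simp: AE_measure_pmf_iff fitch_dist_def fitch_nonempty pmf_pmf_of_set_bool simp del: pmf_of_set)
  finally show ?thesis
    by (simp add: mp_bias_def)
qed

lemma RA_coin_eq_coin_bias: "RA_coin T \<alpha> = (1 + coin_bias T \<alpha>) / 2"
proof -
  have "agreement \<alpha> = (\<lambda>b. 2 * indicator {\<alpha>} b - 1)"
    by (auto simp: agreement_def)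
  then have "coin_bias T \<alpha> = 2 * pmf (coin_dist T \<alpha>) \<alpha> - 1"
    by (simp add: coin_bias_def measure_pmf_single)
  then show ?thesis
    by (simp add: RA_coin_def coin_dist_def)
qed

lemma mp_bias_edge:
  assumes "0 \<le> p" "p \<le> 1"
  shows "measure_pmf.expectation (edge p s \<bind> fitch_dist T) (fitch_bias s) = (1 - 2 * p) * mp_bias T s"
proof -
  have "measure_pmf.expectation (fitch_dist T (\<not> s)) (fitch_bias s) = - mp_bias T s"
    by (simp add: fitch_dist_Not fitch_bias_image_Not mp_bias_def)
  then show ?thesis
    using assms by (simp add: expectation_bind_pmf_finite expectation_edge mp_bias_def algebra_simps)
qed

lemma coin_bias_edge:
  assumes "0 \<le> p" "p \<le> 1"
  shows "measure_pmf.expectation (edge p s \<bind> coin_dist T) (agreement s) = (1 - 2 * p) * coin_bias T s"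
proof -
  have "measure_pmf.expectation (coin_dist T (\<not> s)) (agreement s) = - coin_bias T s"
    by (simp add: coin_dist_Not agreement_Not coin_bias_def)
  then show ?thesis
    using assms by (simp add: expectation_bind_pmf_finite expectation_edge coin_bias_def algebra_simps)
qed

lemma expectation_fitch_comb:
  fixes M1 M2 :: "bool set pmf"
  assumes "\<And>A. A \<in> set_pmf M1 \<Longrightarrow> A \<noteq> {}" and "\<And>B. B \<in> set_pmf M2 \<Longrightarrow> B \<noteq> {}"
  shows "measure_pmf.expectation (M1 \<bind> (\<lambda>A. M2 \<bind> (\<lambda>B. return_pmf (fitch_comb A B)))) (fitch_bias s) =
    (measure_pmf.expectation M1 (fitch_bias s) * (1 + measure_pmf.expectation M2 ambiguous) +
     measure_pmf.expectation M2 (fitch_bias s) * (1 + measure_pmf.expectation M1 ambiguous)) / 2"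
proof -
  have "measure_pmf.expectation (M1 \<bind> (\<lambda>A. M2 \<bind> (\<lambda>B. return_pmf (fitch_comb A B)))) (fitch_bias s) =
      measure_pmf.expectation M1 (\<lambda>A. measure_pmf.expectation M2 (\<lambda>B.
        (fitch_bias s A * (1 + ambiguous B) + fitch_bias s B * (1 + ambiguous A)) / 2))"
    unfolding expectation_bind_pmf_finite expectation_return_pmf
    by (intro integral_cong_AE AE_pmfI) (simp_all add: assms fitch_bias_fitch_comb)
  then show ?thesis
    by (simp add: algebra_simps)
qed

lemma mp_bias_Node_ge:
  assumes "0 \<le> p1" "p1 \<le> 1/2" "0 \<le> p2" "p2 \<le> 1/2" "0 \<le> mp_bias l s" "0 \<le> mp_bias r s"
  shows "((1 - 2 * p1) * mp_bias l s + (1 - 2 * p2) * mp_bias r s) / 2 \<le> mp_bias (Node p1 l p2 r) s"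
proof -
  define a1 where "a1 = measure_pmf.expectation (edge p1 s \<bind> fitch_dist l) ambiguous"
  define a2 where "a2 = measure_pmf.expectation (edge p2 s \<bind> fitch_dist r) ambiguous"
  have "0 \<le> a1" "0 \<le> a2"
    by (simp_all add: a1_def a2_def ambiguous_def)
  have "mp_bias (Node p1 l p2 r) s =
      ((1 - 2 * p1) * mp_bias l s * (1 + a2) + (1 - 2 * p2) * mp_bias r s * (1 + a1)) / 2"
    unfolding mp_bias_def [of "Node p1 l p2 r"] fitch_dist_Node a1_def a2_def
    using assms by (subst expectation_fitch_comb) (auto simp: fitch_dist_def fitch_nonempty mp_bias_edge)
  moreover have "0 \<le> (1 - 2 * p1) * mp_bias l s * a2" "0 \<le> (1 - 2 * p2) * mp_bias r s * a1"
    using assms \<open>0 \<le> a1\<close> \<open>0 \<le> a2\<close> by simp_all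
  ultimately show ?thesis
    by (simp add: field_simps)
qed

lemma coin_bias_Node:
  assumes "0 \<le> p1" "p1 \<le> 1" "0 \<le> p2" "p2 \<le> 1"
  shows "coin_bias (Node p1 l p2 r) s = ((1 - 2 * p1) * coin_bias l s + (1 - 2 * p2) * coin_bias r s) / 2"
  using assms
  by (simp add: coin_bias_def [of "Node p1 l p2 r"] coin_dist_Node expectation_bind_pmf_finite
      expectation_coin_toss flip: coin_bias_edge)

lemma coin_bias_le_mp_bias: "valid_probs T \<Longrightarrow> 0 \<le> coin_bias T s \<and> coin_bias T s \<le> mp_bias T s"
proof (induction T)
  case Leaf
  then show ?case
    by (simp add: coin_bias_def mp_bias_def coin_dist_def fitch_dist_def fitch_bias_def agreement_def
        bind_return_pmf)
next
  case (Node p1 l p2 r)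
  then have p: "0 \<le> p1" "p1 \<le> 1/2" "0 \<le> p2" "p2 \<le> 1/2" "0 \<le> mp_bias l s" "0 \<le> mp_bias r s"
    by auto
  have "0 \<le> (1 - 2 * p1) * coin_bias l s" "(1 - 2 * p1) * coin_bias l s \<le> (1 - 2 * p1) * mp_bias l s"
    "0 \<le> (1 - 2 * p2) * coin_bias r s" "(1 - 2 * p2) * coin_bias r s \<le> (1 - 2 * p2) * mp_bias r s"
    using Node p by (simp_all add: mult_left_mono)
  then show ?case
    using mp_bias_Node_ge [OF p] coin_bias_Node [of p1 p2 l r s] p by simp
qed

theorem theorem5:
  fixes T :: ptree and \<alpha> :: bool
  assumes "T \<noteq> Leaf" and "valid_probs T"
  shows "RA_MP T \<alpha> \<ge> RA_coin T \<alpha>"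
  using coin_bias_le_mp_bias [OF assms(2), of \<alpha>] by (simp add: RA_MP_eq_mp_bias RA_coin_eq_coin_bias)

end
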